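(* Let $\Gamma$ be a graph. If $\Gamma$ is edge-transitive (respectively, arc-transitive), then $\Gamma$ is lobe-transitive and every lobe of $\Gamma$, regarded as a graph in its own right, is edge-transitive (respectively, arc-transitive).
   Context: All graphs are simple, connected, and finite or countably infinite. For edges $e_1,e_2$ write $e_1\cong e_2$ if $e_1=e_2$ or they lie on a common cycle; a lobe is the subgraph induced by an equivalence class of this relation (a cut-edge with its ends, or a maximal biconnected subgraph). $\Gamma$ is lobe-transitive if $\mathrm{Aut}(\Gamma)$ acts transitively on the set of lobes. An arc is an ordered pair of adjacent vertices; arc-transitive means the automorphism group acts transitively on arcs. *)

theory Defs
  imports Main "HOL-Library.Countable_Set"
begin

definition simple_graph :: "'a set \<Rightarrow> ('a \<Rightarrow> 'a \<Rightarrow> bool) \<Rightarrow> bool" where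
  "simple_graph V E \<longleftrightarrow> (\<forall>x y. E x y \<longrightarrow> x \<in> V \<and> y \<in> V) \<and>
     (\<forall>x y. E x y \<longrightarrow> E y x) \<and> (\<forall>x. \<not> E x x)"

definition connected_graph :: "'a set \<Rightarrow> ('a \<Rightarrow> 'a \<Rightarrow> bool) \<Rightarrow> bool" where
  "connected_graph V E \<longleftrightarrow> (\<forall>x\<in>V. \<forall>y\<in>V. E\<^sup>*\<^sup>* x y)"

definition graph_aut :: "'a set \<Rightarrow> ('a \<Rightarrow> 'a \<Rightarrow> bool) \<Rightarrow> ('a \<Rightarrow> 'a) \<Rightarrow> bool" where
  "graph_aut V E f \<longleftrightarrow> bij_betw f V V \<and> (\<forall>x\<in>V. \<forall>y\<in>V. E x y \<longleftrightarrow> E (f x) (f y))"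

definition graph_edges :: "('a \<Rightarrow> 'a \<Rightarrow> bool) \<Rightarrow> 'a set set" where
  "graph_edges E = {{x, y} | x y. E x y}"

definition graph_arcs :: "('a \<Rightarrow> 'a \<Rightarrow> bool) \<Rightarrow> ('a \<times> 'a) set" where
  "graph_arcs E = {(x, y). E x y}"

definition edge_transitive :: "'a set \<Rightarrow> ('a \<Rightarrow> 'a \<Rightarrow> bool) \<Rightarrow> bool" where
  "edge_transitive V E \<longleftrightarrow> (\<forall>e1\<in>graph_edges E. \<forall>e2\<in>graph_edges E.
      \<exists>f. graph_aut V E f \<and> f ` e1 = e2)"

definition arc_transitive :: "'a set \<Rightarrow> ('a \<Rightarrow> 'a \<Rightarrow> bool) \<Rightarrow> bool" where
  "arc_transitive V E \<longleftrightarrow> (\<forall>a\<in>graph_arcs E. \<forall>b\<in>graph_arcs E.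
      \<exists>f. graph_aut V E f \<and> f (fst a) = fst b \<and> f (snd a) = snd b)"

definition is_cycle :: "('a \<Rightarrow> 'a \<Rightarrow> bool) \<Rightarrow> 'a list \<Rightarrow> bool" where
  "is_cycle E cs \<longleftrightarrow> length cs \<ge> 3 \<and> distinct cs \<and>
     (\<forall>i < length cs. E (cs ! i) (cs ! ((i + 1) mod length cs)))"

definition cycle_edges :: "'a list \<Rightarrow> 'a set set" where
  "cycle_edges cs = {{cs ! i, cs ! ((i + 1) mod length cs)} | i. i < length cs}"

definition lobe_rel :: "('a \<Rightarrow> 'a \<Rightarrow> bool) \<Rightarrow> 'a set \<Rightarrow> 'a set \<Rightarrow> bool" where
  "lobe_rel E e1 e2 \<longleftrightarrow> e1 \<in> graph_edges E \<and> e2 \<in> graph_edges E \<and>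
     (e1 = e2 \<or> (\<exists>cs. is_cycle E cs \<and> e1 \<in> cycle_edges cs \<and> e2 \<in> cycle_edges cs))"

text \<open>Lobes, represented by their edge sets (equivalence classes of lobe_rel).\<close>
definition lobes :: "('a \<Rightarrow> 'a \<Rightarrow> bool) \<Rightarrow> 'a set set set" where
  "lobes E = {{e'. lobe_rel E e e'} | e. e \<in> graph_edges E}"

text \<open>The lobe with edge set L as a graph in its own right: vertices are the ends of its edges.\<close>
definition lobe_verts :: "'a set set \<Rightarrow> 'a set" where
  "lobe_verts L = \<Union> L"

definition lobe_adj :: "'a set set \<Rightarrow> 'a \<Rightarrow> 'a \<Rightarrow> bool" where
  "lobe_adj L x y \<longleftrightarrow> x \<noteq> y \<and> {x, y} \<in> L"

definition lobe_transitive :: "'a set \<Rightarrow> ('a \<Rightarrow> 'a \<Rightarrow> bool) \<Rightarrow> bool" where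
  "lobe_transitive V E \<longleftrightarrow> (\<forall>L1\<in>lobes E. \<forall>L2\<in>lobes E.
      \<exists>f. graph_aut V E f \<and> (\<lambda>e. f ` e) ` L1 = L2)"

end

theory Submission
  imports Defs
begin

(* Lying on a common cycle is transitive, so lobes are the classes of an equivalence relation
   on edges. Indeed, let C1 contain e1 and e, and C2 contain e and e2. Both ends of e lie on
   C1, so following C2 through e2 from its last vertex on C1 to its first gives a path from b
   to a whose interior avoids C1; one of the two arcs of C1 between a and b contains e1, and
   together the two paths form a cycle through e1 and e2.
   Automorphisms map cycles to cycles, hence lobes to lobes. An automorphism sending some edge
   of a lobe L into L therefore stabilises L and restricts to an automorphism of L; this
   transfers edge- and arc-transitivity from the graph to its lobes and makes it lobe-transitive. *)

fun path_edges :: "'a list \<Rightarrow> 'a set set" where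
  "path_edges (x # y # xs) = insert {x, y} (path_edges (y # xs))"
| "path_edges _ = {}"

lemma path_edges_conv_nth: "path_edges xs = {{xs ! i, xs ! Suc i} | i. Suc i < length xs}"
proof (induction xs rule: path_edges.induct)
  case (1 x y xs)
  have "{{(x # y # xs) ! i, (x # y # xs) ! Suc i} | i. Suc i < length (x # y # xs)} =
        insert {x, y} {{(y # xs) ! i, (y # xs) ! Suc i} | i. Suc i < length (y # xs)}"
    by (auto simp: less_Suc_eq_0_disj) (metis nth_Cons_0, metis nth_Cons_Suc)
  then show ?case using 1 by simp
qed auto

lemma path_edges_append:
  "path_edges (xs @ ys) =
     path_edges xs \<union> path_edges ys \<union> (if xs = [] \<or> ys = [] then {} else {{last xs, hd ys}})"
  by (induction xs rule: path_edges.induct) (auto simp: neq_Nil_conv)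

lemma path_edges_append_shared: "path_edges (xs @ y # zs) = path_edges (xs @ [y]) \<union> path_edges (y # zs)"
  by (induction xs rule: path_edges.induct) auto

lemma successively_append_shared:
  "successively P (xs @ y # zs) \<longleftrightarrow> successively P (xs @ [y]) \<and> successively P (y # zs)"
  by (auto simp: successively_append_iff)

lemma path_edges_Cons: "path_edges (x # xs) = (if xs = [] then {} else insert {x, hd xs} (path_edges xs))"
  by (cases xs) auto

lemma path_edges_rev: "path_edges (rev xs) = path_edges xs"
  by (induction xs) (auto simp: path_edges_append path_edges_Cons last_rev insert_commute)

lemma path_edges_map: "path_edges (map f xs) = (\<lambda>e. f ` e) ` path_edges xs"
  by (induction xs rule: path_edges.induct) auto

(* A cycle cs is handled through its closed walk cs @ [hd cs], which replaces the modular
   indexing in is_cycle and cycle_edges by list operations. *)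
lemma nth_closed_walk:
  assumes "i < length cs"
  shows "(cs @ [hd cs]) ! Suc i = cs ! (Suc i mod length cs)"
proof (cases "Suc i < length cs")
  case False
  with assms have "Suc i = length cs" by simp
  then show ?thesis by (cases cs) (simp_all add: nth_append)
qed (simp add: nth_append)

lemma cycle_edges_conv_path_edges: "cycle_edges cs = path_edges (cs @ [hd cs])"
proof -
  have "{(cs @ [hd cs]) ! i, (cs @ [hd cs]) ! Suc i} = {cs ! i, cs ! (Suc i mod length cs)}"
    if "i < length cs" for i
    using that nth_closed_walk[OF that] by (simp add: nth_append_left)
  then show ?thesis
    unfolding cycle_edges_def path_edges_conv_nth by (auto simp del: nth_append_length)
qed

lemma is_cycle_iff_successively:
  "is_cycle E cs \<longleftrightarrow> 3 \<le> length cs \<and> distinct cs \<and> successively E (cs @ [hd cs])"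
proof -
  have "E ((cs @ [hd cs]) ! i) ((cs @ [hd cs]) ! Suc i) \<longleftrightarrow> E (cs ! i) (cs ! (Suc i mod length cs))"
    if "i < length cs" for i
    using that nth_closed_walk[OF that] by (simp add: nth_append_left)
  then show ?thesis
    unfolding is_cycle_def successively_conv_nth by (auto simp del: nth_append_length)
qed

lemma is_cycle_append_swap: "is_cycle E (p @ q) \<Longrightarrow> is_cycle E (q @ p)"
  by (cases "p = [] \<or> q = []")
     (auto simp: is_cycle_iff_successively successively_append_iff)

lemma cycle_edges_append_swap: "cycle_edges (q @ p) = cycle_edges (p @ q)"
  by (cases "p = [] \<or> q = []")
     (auto simp: cycle_edges_conv_path_edges path_edges_append insert_commute)

lemma cycle_edges_two_paths:
  "cycle_edges (a # ms @ b # ns) = path_edges (a # ms @ [b]) \<union> path_edges (b # ns @ [a])"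
  using path_edges_append_shared[of "a # ms" b "ns @ [a]"]
  by (simp add: cycle_edges_conv_path_edges)

lemma is_cycle_two_paths:
  "is_cycle E (a # ms @ b # ns) \<longleftrightarrow>
     distinct (a # ms @ b # ns) \<and> (ms \<noteq> [] \<or> ns \<noteq> []) \<and>
     successively E (a # ms @ [b]) \<and> successively E (b # ns @ [a])"
  using successively_append_shared[of E "a # ms" b "ns @ [a]"]
  by (auto simp: is_cycle_iff_successively Suc_le_eq)

lemma cycle_rotate_to_edge:
  assumes "is_cycle E C" and "e \<in> cycle_edges C"
  obtains P where "is_cycle E P" "set P = set C" "e = {last P, hd P}"
proof -
  obtain i where i: "i < length C" "e = {C ! i, C ! (Suc i mod length C)}"
    using assms(2) unfolding cycle_edges_def by auto
  define P where "P = drop (Suc i) C @ take (Suc i) C"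
  have "is_cycle E P"
    using is_cycle_append_swap[of E "take (Suc i) C"] assms(1) by (simp add: P_def)
  moreover have "set P = set C"
    by (metis P_def append_take_drop_id set_append sup_commute)
  moreover have "last P = C ! i"
    using i(1) by (auto simp: P_def last_append last_conv_nth)
  moreover have "hd P = C ! (Suc i mod length C)"
  proof (cases "Suc i < length C")
    case False
    with i(1) have "Suc i = length C" by simp
    then show ?thesis by (cases C) (simp_all add: P_def)
  qed (simp add: P_def hd_drop_conv_nth)
  ultimately show ?thesis using that i(2) by (metis insert_commute)
qed

lemma cycle_edges_subset:
  assumes "e \<in> cycle_edges C"
  shows "e \<subseteq> set C"
proof -
  obtain i where i: "i < length C" "e = {C ! i, C ! (Suc i mod length C)}"
    using assms unfolding cycle_edges_def by auto
  have "Suc i mod length C < length C"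
    by (rule mod_less_divisor) (use i(1) in linarith)
  then show ?thesis using i by auto
qed

lemma cycle_edge_ends:
  assumes "is_cycle E C" and "e \<in> cycle_edges C"
  obtains x y where "x \<noteq> y" "e = {x, y}"
proof -
  obtain P where P: "is_cycle E P" "set P = set C" "e = {last P, hd P}"
    using cycle_rotate_to_edge[OF assms] .
  then have "3 \<le> length P" "distinct P" by (auto simp: is_cycle_def)
  then have "last P \<noteq> hd P"
    by (cases P rule: rev_cases) (auto simp: hd_append)
  then show ?thesis using that P(3) by blast
qed

lemma cycle_ear:
  assumes "is_cycle E C" "e \<in> cycle_edges C"
    and "u \<in> S" "v \<in> S" "u \<noteq> v" "u \<in> set C" "v \<in> set C"
  obtains a b qs where "a \<in> S" "b \<in> S" "set qs \<inter> S = {}"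
    "distinct (b # qs @ [a])" "successively E (b # qs @ [a])" "e \<in> path_edges (b # qs @ [a])"
proof -
  obtain P where P: "is_cycle E P" "set P = set C" "e = {last P, hd P}"
    using cycle_rotate_to_edge[OF assms(1,2)] .
  \<comment> \<open>a and b are the first and last vertices of P in S; the closing edge e lies on the
     segment from b around to a.\<close>
  obtain xs a rest where P_a: "P = xs @ a # rest" and a: "a \<in> S" and xs: "\<forall>z\<in>set xs. z \<notin> S"
    using split_list_first_prop[of P "\<lambda>z. z \<in> S"] assms(3,6) P(2) by blast
  obtain w where "w \<in> S" "w \<in> set P" "w \<noteq> a"
    using assms(3-7) P(2) by metis
  then have "\<exists>z\<in>set rest. z \<in> S"
    using xs unfolding P_a by auto
  then obtain ys b zs where rest: "rest = ys @ b # zs" and b: "b \<in> S" and zs: "\<forall>z\<in>set zs. z \<notin> S"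
    using split_list_last_prop[of rest "\<lambda>z. z \<in> S"] by blast
  have "is_cycle E ((b # zs) @ xs @ a # ys)"
    using is_cycle_append_swap[of E "xs @ a # ys" "b # zs"] P(1) by (simp add: P_a rest)
  then have "distinct (b # (zs @ xs) @ [a])" "successively E (b # (zs @ xs) @ [a])"
    using is_cycle_two_paths[of E b "zs @ xs" a ys] by auto
  moreover have "e \<in> path_edges ((b # zs) @ xs @ [a])"
    using P(3) unfolding P_a rest path_edges_append by (auto simp: last_append hd_append)
  moreover have "set (zs @ xs) \<inter> S = {}" using xs zs by auto
  ultimately show ?thesis using that[of a b "zs @ xs"] a b by simp
qed

lemma cycle_arc:
  assumes "symp E" "is_cycle E C" "e \<in> cycle_edges C" "a \<in> set C" "b \<in> set C" "a \<noteq> b"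
  obtains ms where "set ms \<subseteq> set C" "distinct (a # ms @ [b])"
    "successively E (a # ms @ [b])" "e \<in> path_edges (a # ms @ [b])"
proof -
  obtain p q where C: "C = p @ a # q" using assms(4) split_list by metis
  have "b \<in> set (q @ p)" using assms(5,6) C by auto
  then obtain ms ns where qp: "q @ p = ms @ b # ns" using split_list by metis
  have C': "a # q @ p = a # ms @ b # ns" using qp by simp
  have "is_cycle E (a # ms @ b # ns)"
    using is_cycle_append_swap[of E p "a # q"] assms(2) C' by (simp add: C)
  then have dist: "distinct (a # ms @ b # ns)"
    and path1: "successively E (a # ms @ [b])" and path2: "successively E (b # ns @ [a])"
    unfolding is_cycle_two_paths by simp_all
  have "set (ms @ b # ns) \<subseteq> set C" unfolding qp[symmetric] C by auto
  then have sub: "set ms \<subseteq> set C" "set ns \<subseteq> set C" by auto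
  have "e \<in> cycle_edges (a # ms @ b # ns)"
    using assms(3) cycle_edges_append_swap[of "a # q" p] C' by (simp add: C)
  then consider "e \<in> path_edges (a # ms @ [b])" | "e \<in> path_edges (b # ns @ [a])"
    unfolding cycle_edges_two_paths by blast
  then show ?thesis
  proof cases
    case 1
    then show ?thesis using that sub dist path1 by simp
  next
    case 2
    have "(\<lambda>x y. E y x) = E" using assms(1) by (auto simp: symp_def)
    then have "successively E (rev (b # ns @ [a]))"
      using path2 by (simp only: successively_rev)
    moreover have "e \<in> path_edges (rev (b # ns @ [a]))"
      using 2 by (simp only: path_edges_rev)
    moreover have "distinct (a # rev ns @ [b])" "set (rev ns) \<subseteq> set C"
      using dist sub by auto
    ultimately show ?thesis
      using that[of "rev ns"] by simp
  qed
qed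

lemma cycle_through_edges_of_overlapping_cycles:
  assumes "symp E"
    and C1: "is_cycle E C1" "e1 \<in> cycle_edges C1" "e \<in> cycle_edges C1"
    and C2: "is_cycle E C2" "e \<in> cycle_edges C2" "e2 \<in> cycle_edges C2"
  shows "e1 = e2 \<or> (\<exists>C. is_cycle E C \<and> e1 \<in> cycle_edges C \<and> e2 \<in> cycle_edges C)"
proof -
  obtain x y where xy: "x \<noteq> y" "e = {x, y}"
    using cycle_edge_ends[OF C1(1,3)] .
  have x: "x \<in> set C1" "x \<in> set C2" and y: "y \<in> set C1" "y \<in> set C2"
    using cycle_edges_subset[OF C1(3)] cycle_edges_subset[OF C2(2)] xy(2) by auto
  obtain a b qs where ear: "a \<in> set C1" "b \<in> set C1" "set qs \<inter> set C1 = {}"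
    "distinct (b # qs @ [a])" "successively E (b # qs @ [a])" "e2 \<in> path_edges (b # qs @ [a])"
    using cycle_ear[OF C2(1,3) x(1) y(1) xy(1) x(2) y(2)] .
  have "a \<noteq> b" using ear(4) by auto
  then obtain ms where arc: "set ms \<subseteq> set C1" "distinct (a # ms @ [b])"
    "successively E (a # ms @ [b])" "e1 \<in> path_edges (a # ms @ [b])"
    using cycle_arc[OF assms(1) C1(1,2) ear(1,2)] by blast
  show ?thesis
  proof (cases "ms = [] \<and> qs = []")
    case True
    then show ?thesis using arc(4) ear(6) by (simp add: insert_commute)
  next
    case False
    have "distinct (a # ms @ b # qs)" using arc(1,2) ear(3,4) by auto
    then have "is_cycle E (a # ms @ b # qs)"
      using False arc(3) ear(5) by (simp add: is_cycle_two_paths)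
    moreover have "e1 \<in> cycle_edges (a # ms @ b # qs)" "e2 \<in> cycle_edges (a # ms @ b # qs)"
      using arc(4) ear(6) by (simp_all add: cycle_edges_two_paths)
    ultimately show ?thesis by blast
  qed
qed

lemma lobe_rel_sym: "lobe_rel E e1 e2 \<Longrightarrow> lobe_rel E e2 e1"
  unfolding lobe_rel_def by blast

lemma lobe_rel_trans:
  assumes "symp E" "lobe_rel E e1 e2" "lobe_rel E e2 e3"
  shows "lobe_rel E e1 e3"
proof (cases "e1 = e2 \<or> e2 = e3")
  case False
  then obtain C1 C2 where "is_cycle E C1" "e1 \<in> cycle_edges C1" "e2 \<in> cycle_edges C1"
    "is_cycle E C2" "e2 \<in> cycle_edges C2" "e3 \<in> cycle_edges C2"
    using assms(2,3) unfolding lobe_rel_def by blast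
  then have "e1 = e3 \<or> (\<exists>C. is_cycle E C \<and> e1 \<in> cycle_edges C \<and> e3 \<in> cycle_edges C)"
    by (rule cycle_through_edges_of_overlapping_cycles[OF assms(1)])
  moreover have "e1 \<in> graph_edges E" "e3 \<in> graph_edges E"
    using assms(2,3) unfolding lobe_rel_def by auto
  ultimately show ?thesis unfolding lobe_rel_def by blast
next
  case True
  then show ?thesis using assms(2,3) by (elim disjE) simp_all
qed

lemma lobe_rel_class_eq:
  assumes "symp E" "lobe_rel E e e'"
  shows "{x. lobe_rel E e x} = {x. lobe_rel E e' x}"
proof -
  have "lobe_rel E e' x" if "lobe_rel E e x" for x
    using lobe_rel_trans[OF assms(1) lobe_rel_sym[OF assms(2)] that] .
  moreover have "lobe_rel E e x" if "lobe_rel E e' x" for x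
    using lobe_rel_trans[OF assms(1) assms(2) that] .
  ultimately show ?thesis by blast
qed

lemma lobe_eq_lobe_rel_class:
  assumes "symp E" "L \<in> lobes E" "e \<in> L"
  shows "L = {x. lobe_rel E e x}"
proof -
  obtain e0 where L: "L = {x. lobe_rel E e0 x}" using assms(2) unfolding lobes_def by auto
  with assms(3) have "lobe_rel E e0 e" by simp
  then show ?thesis unfolding L by (rule lobe_rel_class_eq[OF assms(1)])
qed

lemma lobes_subset_graph_edges: "L \<in> lobes E \<Longrightarrow> L \<subseteq> graph_edges E"
  unfolding lobes_def lobe_rel_def by auto

lemma simple_graph_symp: "simple_graph V E \<Longrightarrow> symp E"
  unfolding simple_graph_def symp_def by blast

lemma graph_edges_subset: "simple_graph V E \<Longrightarrow> e \<in> graph_edges E \<Longrightarrow> e \<subseteq> V"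
  unfolding simple_graph_def graph_edges_def by auto

lemma doubleton_in_graph_edges_iff: "symp E \<Longrightarrow> {x, y} \<in> graph_edges E \<longleftrightarrow> E x y"
  unfolding graph_edges_def symp_def by (auto simp: doubleton_eq_iff)

lemma is_cycle_subset:
  assumes "simple_graph V E" "is_cycle E C"
  shows "set C \<subseteq> V"
proof
  fix x assume "x \<in> set C"
  then obtain i where "i < length C" "x = C ! i" by (metis in_set_conv_nth)
  then have "E x (C ! ((i + 1) mod length C))" using assms(2) unfolding is_cycle_def by auto
  then show "x \<in> V" using assms(1) unfolding simple_graph_def by blast
qed

lemma graph_aut_inv_into:
  assumes "graph_aut V E f"
  shows "graph_aut V E (inv_into V f)"
proof -
  have bij: "bij_betw f V V" using assms unfolding graph_aut_def by blast
  then have bij_inv: "bij_betw (inv_into V f) V V" by (rule bij_betw_inv_into)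
  have "E x y \<longleftrightarrow> E (inv_into V f x) (inv_into V f y)" if "x \<in> V" "y \<in> V" for x y
  proof -
    have "inv_into V f x \<in> V" "inv_into V f y \<in> V"
      using bij_inv that by (auto simp: bij_betw_def)
    moreover have "f (inv_into V f x) = x" "f (inv_into V f y) = y"
      using bij that by (auto simp: bij_betw_def f_inv_into_f)
    ultimately show ?thesis using assms unfolding graph_aut_def by metis
  qed
  then show ?thesis using bij_inv unfolding graph_aut_def by blast
qed

lemma cycle_edges_map: "cycle_edges (map f C) = (\<lambda>e. f ` e) ` cycle_edges C"
proof (cases "C = []")
  case False
  then have "map f C @ [hd (map f C)] = map f (C @ [hd C])" by (simp add: hd_map)
  then show ?thesis unfolding cycle_edges_conv_path_edges by (metis path_edges_map)
qed (simp add: cycle_edges_conv_path_edges)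

lemma graph_aut_is_cycle:
  assumes "simple_graph V E" "graph_aut V E f" "is_cycle E C"
  shows "is_cycle E (map f C)"
proof -
  have "C \<noteq> []" using assms(3) by (auto simp: is_cycle_def)
  then have V: "set (C @ [hd C]) \<subseteq> V" using is_cycle_subset[OF assms(1,3)] by auto
  have "inj_on f V" using assms(2) unfolding graph_aut_def bij_betw_def by blast
  then have "distinct (map f C)"
    using assms(3) V inj_on_subset by (auto simp: is_cycle_def distinct_map)
  moreover have "successively E (C @ [hd C])"
    using assms(3) by (simp add: is_cycle_iff_successively)
  then have "successively (\<lambda>x y. E (f x) (f y)) (C @ [hd C])"
    by (rule successively_mono) (use V assms(2) in \<open>auto simp: graph_aut_def\<close>)
  then have "successively E (map f (C @ [hd C]))" by (simp only: successively_map)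
  then have "successively E (map f C @ [hd (map f C)])" using \<open>C \<noteq> []\<close> by (simp add: hd_map)
  ultimately show ?thesis using assms(3) by (simp add: is_cycle_iff_successively)
qed

lemma graph_aut_image_graph_edge:
  assumes "simple_graph V E" "graph_aut V E f" "e \<in> graph_edges E"
  shows "f ` e \<in> graph_edges E"
proof -
  obtain x y where "e = {x, y}" "E x y" using assms(3) unfolding graph_edges_def by auto
  moreover then have "x \<in> V" "y \<in> V" using assms(1) unfolding simple_graph_def by auto
  ultimately show ?thesis using assms(2) unfolding graph_aut_def graph_edges_def by auto
qed

lemma graph_aut_lobe_rel:
  assumes "simple_graph V E" "graph_aut V E f" "lobe_rel E e e'"
  shows "lobe_rel E (f ` e) (f ` e')"
proof -
  have "f ` e \<in> graph_edges E" "f ` e' \<in> graph_edges E"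
    using assms(3) graph_aut_image_graph_edge[OF assms(1,2)] unfolding lobe_rel_def by auto
  moreover have "f ` e = f ` e' \<or> (\<exists>C. is_cycle E C \<and> f ` e \<in> cycle_edges C \<and> f ` e' \<in> cycle_edges C)"
  proof (cases "e = e'")
    case False
    then obtain C where "is_cycle E C" "e \<in> cycle_edges C" "e' \<in> cycle_edges C"
      using assms(3) unfolding lobe_rel_def by blast
    then have "is_cycle E (map f C)" "f ` e \<in> cycle_edges (map f C)" "f ` e' \<in> cycle_edges (map f C)"
      using graph_aut_is_cycle[OF assms(1,2)] by (auto simp: cycle_edges_map)
    then show ?thesis by blast
  qed simp
  ultimately show ?thesis unfolding lobe_rel_def by blast
qed

lemma graph_aut_image_lobe_rel_class:
  assumes "simple_graph V E" "graph_aut V E f" "e \<in> graph_edges E"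
  shows "(\<lambda>e. f ` e) ` {x. lobe_rel E e x} = {x. lobe_rel E (f ` e) x}"
proof (intro equalityI subsetI)
  fix x assume "x \<in> {x. lobe_rel E (f ` e) x}"
  then have rel: "lobe_rel E (f ` e) x" by simp
  let ?g = "inv_into V f"
  have bij: "bij_betw f V V" using assms(2) unfolding graph_aut_def by blast
  have "e \<subseteq> V" using graph_edges_subset[OF assms(1,3)] .
  moreover have "x \<subseteq> V"
    using rel graph_edges_subset[OF assms(1)] unfolding lobe_rel_def by blast
  moreover have "lobe_rel E (?g ` f ` e) (?g ` x)"
    using graph_aut_lobe_rel[OF assms(1) graph_aut_inv_into[OF assms(2)] rel] .
  ultimately have "lobe_rel E e (?g ` x)" "x = f ` ?g ` x"
    using bij by (simp_all add: bij_betw_def inv_into_image_cancel image_inv_into_cancel)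
  then show "x \<in> (\<lambda>e. f ` e) ` {x. lobe_rel E e x}" by blast
qed (use graph_aut_lobe_rel[OF assms(1,2)] in auto)

lemma graph_aut_image_lobe:
  assumes "simple_graph V E" "graph_aut V E f" "L \<in> lobes E" "e \<in> L"
  shows "(\<lambda>e. f ` e) ` L = {x. lobe_rel E (f ` e) x}"
proof -
  have L: "L = {x. lobe_rel E e x}"
    using lobe_eq_lobe_rel_class[OF simple_graph_symp[OF assms(1)] assms(3,4)] .
  have "e \<in> graph_edges E" using lobes_subset_graph_edges[OF assms(3)] assms(4) by blast
  then show ?thesis unfolding L by (rule graph_aut_image_lobe_rel_class[OF assms(1,2)])
qed

lemma graph_aut_lobe_graph:
  assumes "inj_on f (\<Union>L)" "(\<lambda>e. f ` e) ` L = L"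
  shows "graph_aut (lobe_verts L) (lobe_adj L) f"
proof -
  have "f ` \<Union>L = \<Union>((\<lambda>e. f ` e) ` L)" by (rule image_Union)
  also have "\<dots> = \<Union>L" unfolding assms(2) ..
  finally have "f ` \<Union>L = \<Union>L" .
  then have "bij_betw f (lobe_verts L) (lobe_verts L)"
    using assms(1) unfolding lobe_verts_def bij_betw_def by blast
  moreover have "lobe_adj L x y \<longleftrightarrow> lobe_adj L (f x) (f y)" if "x \<in> \<Union>L" "y \<in> \<Union>L" for x y
  proof -
    have "{x, y} \<in> Pow (\<Union>L)" "L \<subseteq> Pow (\<Union>L)" using that by auto
    then have "f ` {x, y} \<in> (\<lambda>e. f ` e) ` L \<longleftrightarrow> {x, y} \<in> L"
      by (rule inj_on_image_mem_iff[OF inj_on_image_Pow[OF assms(1)]])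
    moreover have "f x = f y \<longleftrightarrow> x = y" using assms(1) that by (meson inj_on_eq_iff)
    ultimately show ?thesis unfolding lobe_adj_def assms(2) by simp
  qed
  ultimately show ?thesis unfolding graph_aut_def lobe_verts_def by blast
qed

lemma graph_aut_restrict_lobe:
  assumes "simple_graph V E" "graph_aut V E f" "L \<in> lobes E" "e \<in> L" "f ` e \<in> L"
  shows "graph_aut (lobe_verts L) (lobe_adj L) f"
proof (rule graph_aut_lobe_graph)
  have "\<Union>L \<subseteq> V"
    using lobes_subset_graph_edges[OF assms(3)] graph_edges_subset[OF assms(1)] by blast
  moreover have "inj_on f V" using assms(2) unfolding graph_aut_def bij_betw_def by blast
  ultimately show "inj_on f (\<Union>L)" by (rule inj_on_subset[rotated])
  have "(\<lambda>e. f ` e) ` L = {x. lobe_rel E (f ` e) x}"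
    by (rule graph_aut_image_lobe[OF assms(1-4)])
  also have "\<dots> = L"
    by (rule lobe_eq_lobe_rel_class[OF simple_graph_symp[OF assms(1)] assms(3,5), symmetric])
  finally show "(\<lambda>e. f ` e) ` L = L" .
qed

lemma graph_edges_lobe_adj:
  assumes "simple_graph V E" "L \<in> lobes E"
  shows "graph_edges (lobe_adj L) = L"
proof (intro equalityI subsetI)
  fix e assume "e \<in> L"
  then obtain x y where "e = {x, y}" "E x y"
    using lobes_subset_graph_edges[OF assms(2)] unfolding graph_edges_def by blast
  moreover have "x \<noteq> y" using \<open>E x y\<close> assms(1) unfolding simple_graph_def by auto
  ultimately show "e \<in> graph_edges (lobe_adj L)"
    using \<open>e \<in> L\<close> unfolding graph_edges_def lobe_adj_def by auto
qed (auto simp: graph_edges_def lobe_adj_def)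

lemma arc_transitive_imp_edge_transitive:
  assumes "arc_transitive V E"
  shows "edge_transitive V E"
  unfolding edge_transitive_def
proof (intro ballI)
  fix e1 e2 assume "e1 \<in> graph_edges E" "e2 \<in> graph_edges E"
  then obtain x1 y1 x2 y2 where e: "e1 = {x1, y1}" "E x1 y1" "e2 = {x2, y2}" "E x2 y2"
    unfolding graph_edges_def by auto
  then obtain f where "graph_aut V E f" "f x1 = x2" "f y1 = y2"
    using assms unfolding arc_transitive_def graph_arcs_def by fastforce
  then show "\<exists>f. graph_aut V E f \<and> f ` e1 = e2" using e by auto
qed

lemma edge_transitive_imp_lobe_transitive:
  assumes "simple_graph V E" "edge_transitive V E"
  shows "lobe_transitive V E"
  unfolding lobe_transitive_def
proof (intro ballI)
  fix L1 L2 assume "L1 \<in> lobes E" "L2 \<in> lobes E"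
  then obtain e1 e2 where e: "e1 \<in> graph_edges E" "e2 \<in> graph_edges E"
    and L: "L1 = {x. lobe_rel E e1 x}" "L2 = {x. lobe_rel E e2 x}"
    unfolding lobes_def by blast
  obtain f where f: "graph_aut V E f" "f ` e1 = e2"
    using assms(2) e unfolding edge_transitive_def by blast
  have "(\<lambda>e. f ` e) ` L1 = L2"
    unfolding L graph_aut_image_lobe_rel_class[OF assms(1) f(1) e(1)] f(2) ..
  with f(1) show "\<exists>f. graph_aut V E f \<and> (\<lambda>e. f ` e) ` L1 = L2" by blast
qed

lemma edge_transitive_lobe:
  assumes "simple_graph V E" "edge_transitive V E" "L \<in> lobes E"
  shows "edge_transitive (lobe_verts L) (lobe_adj L)"
  unfolding edge_transitive_def graph_edges_lobe_adj[OF assms(1,3)]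
proof (intro ballI)
  fix e1 e2 assume e: "e1 \<in> L" "e2 \<in> L"
  then have "e1 \<in> graph_edges E" "e2 \<in> graph_edges E"
    using lobes_subset_graph_edges[OF assms(3)] by blast+
  then obtain f where f: "graph_aut V E f" "f ` e1 = e2"
    using assms(2) unfolding edge_transitive_def by blast
  have "graph_aut (lobe_verts L) (lobe_adj L) f"
    by (rule graph_aut_restrict_lobe[OF assms(1) f(1) assms(3) e(1)]) (simp add: f(2) e(2))
  with f(2) show "\<exists>f. graph_aut (lobe_verts L) (lobe_adj L) f \<and> f ` e1 = e2" by blast
qed

lemma arc_transitive_lobe:
  assumes "simple_graph V E" "arc_transitive V E" "L \<in> lobes E"
  shows "arc_transitive (lobe_verts L) (lobe_adj L)"
  unfolding arc_transitive_def
proof (intro ballI)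
  fix a b assume "a \<in> graph_arcs (lobe_adj L)" "b \<in> graph_arcs (lobe_adj L)"
  then obtain x1 y1 x2 y2 where ab: "a = (x1, y1)" "b = (x2, y2)" and L: "{x1, y1} \<in> L" "{x2, y2} \<in> L"
    unfolding graph_arcs_def lobe_adj_def by auto
  then have "E x1 y1" "E x2 y2"
    using lobes_subset_graph_edges[OF assms(3)] doubleton_in_graph_edges_iff[OF simple_graph_symp[OF assms(1)]]
    by auto
  then obtain f where f: "graph_aut V E f" "f x1 = x2" "f y1 = y2"
    using assms(2) unfolding arc_transitive_def graph_arcs_def by fastforce
  then have "graph_aut (lobe_verts L) (lobe_adj L) f"
    using graph_aut_restrict_lobe[OF assms(1) f(1) assms(3) L(1)] L(2) by simp
  then show "\<exists>f. graph_aut (lobe_verts L) (lobe_adj L) f \<and> f (fst a) = fst b \<and> f (snd a) = snd b"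
    using f ab by auto
qed

theorem lemma4p1:
  fixes V :: "'a set" and E :: "'a \<Rightarrow> 'a \<Rightarrow> bool"
  assumes "simple_graph V E" and "connected_graph V E" and "countable V"
  shows "(edge_transitive V E \<longrightarrow> lobe_transitive V E \<and>
            (\<forall>L\<in>lobes E. edge_transitive (lobe_verts L) (lobe_adj L)))
       \<and> (arc_transitive V E \<longrightarrow> lobe_transitive V E \<and>
            (\<forall>L\<in>lobes E. arc_transitive (lobe_verts L) (lobe_adj L)))"
proof (intro conjI impI ballI)
  show "lobe_transitive V E" if "edge_transitive V E"
    using edge_transitive_imp_lobe_transitive[OF assms(1) that] .
  show "lobe_transitive V E" if "arc_transitive V E"
    using edge_transitive_imp_lobe_transitive[OF assms(1) arc_transitive_imp_edge_transitive[OF that]] .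
  show "edge_transitive (lobe_verts L) (lobe_adj L)" if "edge_transitive V E" "L \<in> lobes E" for L
    using edge_transitive_lobe[OF assms(1) that] .
  show "arc_transitive (lobe_verts L) (lobe_adj L)" if "arc_transitive V E" "L \<in> lobes E" for L
    using arc_transitive_lobe[OF assms(1) that] .
qed

end
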